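(* Let $N,l$ be positive integers with $l<N$, let $\hat a(\xi)=\cos^{2N}(\xi/2)\sum_{j=0}^{l}\binom{N-1+j}{j}\sin^{2j}(\xi/2)$ be the mask of the pseudo spline of type II of order $(N,l)$, and let $\hat b(\xi)=e^{-i\xi}\overline{\hat a(\xi+\pi)}$. Then for all $0\le\alpha<\beta\le\pi$ and all $\xi\in\mathbb R$, $$|\hat b(\alpha)|\,\chi_{[-\beta,-\alpha]\cup[\alpha,\beta]}(\xi)\le|\hat b(\xi)|\le\min\Big\{1,\ \frac{\sum_{j=0}^{l}\binom{N+l}{j}}{2^{2N}}|\xi|^{2N}\Big\}.$$ *)

theory Defs
  imports "HOL-Analysis.Analysis"
begin

definition pseudo_mask_II :: "nat \<Rightarrow> nat \<Rightarrow> real \<Rightarrow> complex" where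
  "pseudo_mask_II N l \<xi> = complex_of_real
     ((cos (\<xi>/2)) ^ (2*N) * (\<Sum>j=0..l. real ((N - 1 + j) choose j) * (sin (\<xi>/2)) ^ (2*j)))"

definition pseudo_mask_b :: "nat \<Rightarrow> nat \<Rightarrow> real \<Rightarrow> complex" where
  "pseudo_mask_b N l \<xi> = cis (- \<xi>) * cnj (pseudo_mask_II N l (\<xi> + pi))"

end

theory Submission
  imports Defs
begin

text \<open>Writing y = cos(\<xi>/2)^2, one has |b(\<xi>)| = h(y) for the polynomial
  h(y) = (1 - y)^N * sum_{j<=l} C(N-1+j, j) y^j. The derivative of h telescopes to
  -(N+l) C(N-1+l, l) (1-y)^(N-1) y^l, so h decreases on [0,1] from h(0) = 1; as cos(\<xi>/2)^2
  decreases in |\<xi>| on [0,pi], this gives the lower bound and the bound by 1. Bounding each y^j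
  by 1 and using 1 - y = sin(\<xi>/2)^2 \<le> \<xi>^2/4 gives the polynomial bound.\<close>

definition pseudo_spline_poly :: "nat \<Rightarrow> nat \<Rightarrow> real \<Rightarrow> real" where
  "pseudo_spline_poly N l y = (1 - y) ^ N * (\<Sum>j=0..l. real ((N - 1 + j) choose j) * y ^ j)"

lemma Suc_times_binomial_shift:
  assumes "N \<ge> 1"
  shows "real (Suc l) * real ((N - 1 + Suc l) choose Suc l) = real (N + l) * real ((N - 1 + l) choose l)"
proof -
  have "Suc (N - 1 + l) * ((N - 1 + l) choose l) = (Suc (N - 1 + l) choose Suc l) * Suc l"
    by (rule Suc_times_binomial_eq)
  moreover have "Suc (N - 1 + l) = N + l" "N - 1 + Suc l = N + l" using assms by auto
  ultimately have "(N + l) * ((N - 1 + l) choose l) = Suc l * ((N - 1 + Suc l) choose Suc l)"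
    by simp
  then show ?thesis by (metis of_nat_mult)
qed

lemma pseudo_spline_sum_telescope:
  fixes y :: real
  assumes "N \<ge> 1"
  defines "c \<equiv> \<lambda>j. real ((N - 1 + j) choose j)"
  shows "- real N * (\<Sum>j=0..l. c j * y ^ j) + (1 - y) * (\<Sum>j=0..l. c j * (real j * y ^ (j - 1)))
         = - real (N + l) * c l * y ^ l"
proof (induction l)
  case 0
  then show ?case by (simp add: c_def)
next
  case (Suc l)
  have shift: "real (Suc l) * c (Suc l) = real (N + l) * c l"
    unfolding c_def by (rule Suc_times_binomial_shift[OF assms(1)])
  have "- real N * (\<Sum>j=0..Suc l. c j * y ^ j) + (1 - y) * (\<Sum>j=0..Suc l. c j * (real j * y ^ (j - 1)))
      = (- real N * (\<Sum>j=0..l. c j * y ^ j) + (1 - y) * (\<Sum>j=0..l. c j * (real j * y ^ (j - 1))))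
        - real N * c (Suc l) * y ^ Suc l + (1 - y) * (real (Suc l) * c (Suc l)) * y ^ l"
    by (simp add: algebra_simps)
  also have "\<dots> = - real (N + l) * c l * y ^ l - real N * c (Suc l) * y ^ Suc l
        + (1 - y) * (real (N + l) * c l) * y ^ l"
    using Suc.IH shift by simp
  also have "\<dots> = - real N * c (Suc l) * y ^ Suc l - y * (real (Suc l) * c (Suc l)) * y ^ l"
    using shift by (simp add: algebra_simps)
  also have "\<dots> = - real (N + Suc l) * c (Suc l) * y ^ Suc l"
    by (simp add: algebra_simps)
  finally show ?case .
qed

lemma pseudo_spline_poly_has_real_derivative:
  assumes "N \<ge> 1"
  shows "(pseudo_spline_poly N l has_real_derivative
           - (real (N + l) * real ((N - 1 + l) choose l) * (1 - y) ^ (N - 1) * y ^ l)) (at y)"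
proof -
  define c where "c j = real ((N - 1 + j) choose j)" for j
  define S where "S = (\<Sum>j=0..l. c j * y ^ j)"
  define S' where "S' = (\<Sum>j=0..l. c j * (real j * y ^ (j - 1)))"
  have d_factor: "((\<lambda>y. (1 - y) ^ N) has_real_derivative real N * (1 - y) ^ (N - 1) * (-1)) (at y)"
  proof -
    have "((\<lambda>y. 1 - y) has_real_derivative 0 - 1) (at y)"
      by (intro DERIV_diff DERIV_const DERIV_ident)
    from DERIV_power[OF this, of N] show ?thesis by (simp add: mult.commute)
  qed
  have d_sum: "((\<lambda>y. \<Sum>j=0..l. c j * y ^ j) has_real_derivative S') (at y)"
    unfolding S'_def by (intro DERIV_sum DERIV_cmult) (simp add: DERIV_pow)
  have split_power: "(1 - y) ^ N = (1 - y) ^ (N - 1) * (1 - y)"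
    using assms by (cases N) auto
  have "real N * (1 - y) ^ (N - 1) * (-1) * S + S' * (1 - y) ^ N
      = (1 - y) ^ (N - 1) * (- real N * S + (1 - y) * S')"
    unfolding split_power by (simp add: algebra_simps)
  also have "- real N * S + (1 - y) * S' = - real (N + l) * c l * y ^ l"
    unfolding S_def S'_def c_def by (rule pseudo_spline_sum_telescope[OF assms])
  also have "(1 - y) ^ (N - 1) * (- real (N + l) * c l * y ^ l)
      = - (real (N + l) * c l * (1 - y) ^ (N - 1) * y ^ l)"
    by (simp add: algebra_simps)
  finally show ?thesis
    using DERIV_mult[OF d_factor d_sum]
    unfolding pseudo_spline_poly_def c_def[symmetric] S_def by simp
qed

lemma pseudo_spline_poly_antimono:
  assumes "N \<ge> 1" "0 \<le> a" "a \<le> b" "b \<le> 1"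
  shows "pseudo_spline_poly N l b \<le> pseudo_spline_poly N l a"
proof (rule DERIV_nonpos_imp_nonincreasing[OF assms(3)])
  fix x assume "a \<le> x" "x \<le> b"
  define D where "D = real (N + l) * real ((N - 1 + l) choose l) * (1 - x) ^ (N - 1) * x ^ l"
  have "0 \<le> D"
    using assms \<open>a \<le> x\<close> \<open>x \<le> b\<close> by (simp add: D_def)
  moreover have "(pseudo_spline_poly N l has_real_derivative - D) (at x)"
    unfolding D_def by (rule pseudo_spline_poly_has_real_derivative[OF assms(1)])
  ultimately show "\<exists>D. (pseudo_spline_poly N l has_real_derivative D) (at x) \<and> D \<le> 0"
    by (intro exI[of _ "- D"]) simp
qed

lemma pseudo_spline_poly_0 [simp]: "pseudo_spline_poly N l 0 = 1"
proof -
  have "(\<Sum>j=0..l. real ((N - 1 + j) choose j) * 0 ^ j) = (\<Sum>j\<in>{0..l}. if j = 0 then 1 else (0::real))"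
    by (rule sum.cong) auto
  then show ?thesis unfolding pseudo_spline_poly_def by simp
qed

lemma pseudo_spline_poly_le_1:
  assumes "N \<ge> 1" "0 \<le> y" "y \<le> 1"
  shows "pseudo_spline_poly N l y \<le> 1"
  using pseudo_spline_poly_antimono[OF assms(1) order_refl assms(2,3)] by simp

lemma sum_binomial_diagonal:
  assumes "N \<ge> 1"
  shows "(\<Sum>j=0..l. (N - 1 + j) choose j) = (N + l) choose l"
proof -
  have "(\<Sum>j=0..l. (N - 1 + j) choose j) = Suc (N - 1 + l) choose l"
    by (simp add: atLeast0AtMost sum_choose_lower)
  also have "Suc (N - 1 + l) = N + l" using assms by simp
  finally show ?thesis .
qed

lemma pseudo_spline_poly_le_power:
  assumes "N \<ge> 1" "0 \<le> y" "y \<le> 1"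
  shows "pseudo_spline_poly N l y \<le> real ((N + l) choose l) * (1 - y) ^ N"
proof -
  have "(\<Sum>j=0..l. real ((N - 1 + j) choose j) * y ^ j) \<le> (\<Sum>j=0..l. real ((N - 1 + j) choose j))"
    using assms by (intro sum_mono mult_left_le) (auto simp: power_le_one)
  also have "\<dots> = real ((N + l) choose l)"
    using sum_binomial_diagonal[OF assms(1)] by (metis of_nat_sum)
  finally show ?thesis
    unfolding pseudo_spline_poly_def using assms by (simp add: mult.commute mult_left_mono)
qed

lemma norm_pseudo_mask_b:
  shows "cmod (pseudo_mask_b N l \<xi>) = pseudo_spline_poly N l (cos (\<xi> / 2) ^ 2)"
proof -
  have cos_shift: "cos ((\<xi> + pi) / 2) = - sin (\<xi> / 2)"
    and sin_shift: "sin ((\<xi> + pi) / 2) = cos (\<xi> / 2)"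
    using cos_add[of "\<xi>/2" "pi/2"] sin_add[of "\<xi>/2" "pi/2"] by (simp_all add: add_divide_distrib)
  have mask: "pseudo_mask_II N l (\<xi> + pi) = complex_of_real (pseudo_spline_poly N l (cos (\<xi> / 2) ^ 2))"
    unfolding pseudo_mask_II_def pseudo_spline_poly_def cos_shift sin_shift
    by (simp add: power_mult sin_squared_eq power_mult_distrib)
  have "0 \<le> pseudo_spline_poly N l (cos (\<xi> / 2) ^ 2)"
    unfolding pseudo_spline_poly_def
    by (intro mult_nonneg_nonneg sum_nonneg) (auto simp: abs_square_le_1)
  then show ?thesis
    by (simp add: pseudo_mask_b_def mask norm_mult)
qed

lemma cos_half_squared_antimono:
  fixes \<alpha> \<xi> :: real
  assumes "\<alpha> \<le> \<bar>\<xi>\<bar>" "\<bar>\<xi>\<bar> \<le> pi" "0 \<le> \<alpha>"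
  shows "cos (\<xi> / 2) ^ 2 \<le> cos (\<alpha> / 2) ^ 2"
proof -
  have "cos (\<bar>\<xi>\<bar> / 2) \<le> cos (\<alpha> / 2)" "0 \<le> cos (\<bar>\<xi>\<bar> / 2)"
    using assms by (auto intro!: cos_monotone_0_pi_le cos_ge_zero)
  moreover have "cos (\<bar>\<xi>\<bar> / 2) = cos (\<xi> / 2)"
    by (simp add: abs_if)
  ultimately show ?thesis by (metis power_mono)
qed

lemma one_minus_cos_half_squared_le:
  fixes \<xi> :: real
  shows "1 - cos (\<xi> / 2) ^ 2 \<le> \<xi> ^ 2 / 4"
proof -
  have "sin (\<xi> / 2) ^ 2 \<le> (\<xi> / 2) ^ 2"
    using abs_sin_x_le_abs_x[of "\<xi>/2"] by (metis abs_ge_zero power2_abs power_mono)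
  then show ?thesis by (simp add: sin_squared_eq power_divide)
qed

lemma norm_pseudo_mask_b_le_1:
  assumes "N \<ge> 1"
  shows "cmod (pseudo_mask_b N l \<xi>) \<le> 1"
  unfolding norm_pseudo_mask_b
  using assms by (intro pseudo_spline_poly_le_1) (auto simp: abs_square_le_1)

lemma norm_pseudo_mask_b_le_power:
  assumes "N \<ge> 1"
  shows "cmod (pseudo_mask_b N l \<xi>) \<le> real ((N + l) choose l) / 2 ^ (2*N) * \<bar>\<xi>\<bar> ^ (2*N)"
proof -
  define y where "y = cos (\<xi> / 2) ^ 2"
  have y: "0 \<le> y" "y \<le> 1" unfolding y_def by (auto simp: abs_square_le_1)
  have "cmod (pseudo_mask_b N l \<xi>) \<le> real ((N + l) choose l) * (1 - y) ^ N"
    unfolding norm_pseudo_mask_b y_def[symmetric] by (rule pseudo_spline_poly_le_power[OF assms y])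
  also have "(1 - y) ^ N \<le> (\<xi> ^ 2 / 4) ^ N"
    using y one_minus_cos_half_squared_le[of \<xi>] unfolding y_def by (intro power_mono) auto
  also have "\<dots> = \<bar>\<xi>\<bar> ^ (2*N) / 2 ^ (2*N)"
    by (simp add: power_mult power_divide)
  finally show ?thesis
    by (simp add: mult_left_mono)
qed

lemma norm_pseudo_mask_b_mono:
  assumes "N \<ge> 1" "0 \<le> \<alpha>" "\<alpha> \<le> \<bar>\<xi>\<bar>" "\<bar>\<xi>\<bar> \<le> pi"
  shows "cmod (pseudo_mask_b N l \<alpha>) \<le> cmod (pseudo_mask_b N l \<xi>)"
  unfolding norm_pseudo_mask_b
  using assms cos_half_squared_antimono[of \<alpha> \<xi>]
  by (intro pseudo_spline_poly_antimono) (auto simp: abs_square_le_1)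

theorem mainTheorem5:
  fixes N l :: nat and \<alpha> \<beta> \<xi> :: real
  assumes "0 < l" and "l < N"
    and "0 \<le> \<alpha>" and "\<alpha> < \<beta>" and "\<beta> \<le> pi"
  shows "cmod (pseudo_mask_b N l \<alpha>) * indicator ({-\<beta>..-\<alpha>} \<union> {\<alpha>..\<beta>}) \<xi>
           \<le> cmod (pseudo_mask_b N l \<xi>) \<and>
         cmod (pseudo_mask_b N l \<xi>)
           \<le> min 1 ((\<Sum>j=0..l. real ((N + l) choose j)) / 2 ^ (2*N) * \<bar>\<xi>\<bar> ^ (2*N))"
proof -
  have N: "N \<ge> 1" using assms by simp
  have "real ((N + l) choose l) \<le> (\<Sum>j=0..l. real ((N + l) choose j))"
    by (rule member_le_sum) auto
  then have "real ((N + l) choose l) / 2 ^ (2*N) * \<bar>\<xi>\<bar> ^ (2*N)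
      \<le> (\<Sum>j=0..l. real ((N + l) choose j)) / 2 ^ (2*N) * \<bar>\<xi>\<bar> ^ (2*N)"
    by (intro mult_right_mono divide_right_mono) auto
  then have upper: "cmod (pseudo_mask_b N l \<xi>)
      \<le> min 1 ((\<Sum>j=0..l. real ((N + l) choose j)) / 2 ^ (2*N) * \<bar>\<xi>\<bar> ^ (2*N))"
    using norm_pseudo_mask_b_le_1[OF N] norm_pseudo_mask_b_le_power[OF N, of l \<xi>] by simp
  have "cmod (pseudo_mask_b N l \<alpha>) \<le> cmod (pseudo_mask_b N l \<xi>)"
    if "\<xi> \<in> {-\<beta>..-\<alpha>} \<union> {\<alpha>..\<beta>}"
    using that assms by (intro norm_pseudo_mask_b_mono[OF N]) auto
  then show ?thesis
    using upper by (simp add: indicator_def)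
qed

end
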